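(* Let $\phi$ be the Brier scoring rule, whose negative entropy is $h(p)=\|p\|^2-1$, so that for random vectors $U,V$ in $\mathbb{R}^K$, $\mathrm{Var}_h(U\mid V)=\mathbb{E}[\|U\|^2\mid V]-\|\mathbb{E}[U\mid V]\|^2$. Let $C:=\mathbb{E}[Q\mid S]$, $S_B$ a binned version of $S$ and $C_B:=\mathbb{E}[Q\mid S_B]$. Then $$\underbrace{\mathbb{E}\big[\|S_B-C_B\|^2\big]}_{\mathrm{CL}(S_B)}=\underbrace{\mathbb{E}\big[\|S-C\|^2\big]}_{\mathrm{CL}(S)}\;\underbrace{-\;\mathbb{E}\big[\mathrm{Var}_h(S-C\mid S_B)\big]}_{\mathrm{CL}_{\mathrm{induced}}(S,S_B)}.$$
   Context: Let $(X,Y)$ be jointly distributed with $X\in\mathcal{X}$ and $Y\in\{e_1,\dots,e_K\}$ (one-hot vectors of $\mathbb{R}^K$); $\Delta_K$ is the probability simplex; $Q\in\Delta_K$ with $Q_k:=P(Y=e_k\mid X)$; $S=f(X)\in\Delta_K$ for a classifier $f$. Binned classifier: given a partition $\{\mathcal{B}_j\}_{1\le j\le J}$ of $\Delta_K$, $S_B$ equals $\mathbb{E}[S\mid S\in\mathcal{B}_j]$ on $\{S\in\mathcal{B}_j\}$. $\|\cdot\|$ is the Euclidean norm. *)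

theory Defs
  imports "HOL-Probability.Probability"
begin

definition prob_simplex :: "(real ^ 'k::finite) set" where
  "prob_simplex = {p. (\<forall>k. 0 \<le> p $ k) \<and> (\<Sum>k\<in>UNIV. p $ k) = 1}"

definition gen_sigma :: "'a measure \<Rightarrow> ('a \<Rightarrow> 'b) \<Rightarrow> 'b measure \<Rightarrow> 'a measure" where
  "gen_sigma M V N = vimage_algebra (space M) V N"

definition vcond_exp :: "'a measure \<Rightarrow> 'a measure \<Rightarrow> ('a \<Rightarrow> real ^ 'k::finite) \<Rightarrow> 'a \<Rightarrow> real ^ 'k" where
  "vcond_exp M F U = (\<lambda>w. \<chi> k. real_cond_exp M F (\<lambda>w'. U w' $ k) w)"

definition var_h_brier :: "'a measure \<Rightarrow> 'a measure \<Rightarrow> ('a \<Rightarrow> real ^ 'k::finite) \<Rightarrow> 'a \<Rightarrow> real" where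
  "var_h_brier M F U = (\<lambda>w. real_cond_exp M F (\<lambda>w'. (norm (U w'))\<^sup>2) w - (norm (vcond_exp M F U w))\<^sup>2)"

text \<open>Binned classifier: on {S \<in> B j}, S_B equals E[S | S \<in> B j] (elementary conditional expectation).\<close>
definition binned :: "'a measure \<Rightarrow> ('a \<Rightarrow> real ^ 'k::finite) \<Rightarrow> nat \<Rightarrow> (nat \<Rightarrow> (real ^ 'k) set) \<Rightarrow> 'a \<Rightarrow> real ^ 'k" where
  "binned M S J B = (\<lambda>w. \<Sum>j<J. indicator (S -` B j \<inter> space M) w *\<^sub>R
      ((1 / measure M (S -` B j \<inter> space M)) *\<^sub>R (LINT w'|M. indicator (S -` B j \<inter> space M) w' *\<^sub>R S w')))"

end

theory Submission
  imports Defs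
begin

text \<open>Write \<open>D = S - C\<close> and let \<open>G\<close> be the \<open>\<sigma>\<close>-algebra generated by \<open>S_B\<close>. Every event
  of \<open>G\<close> is a union of bins, and on each bin \<open>S_B\<close> is the average of \<open>S\<close>, so
  \<open>E[S | G] = S_B\<close>; as \<open>S_B\<close> is a function of \<open>S\<close>, the tower property gives \<open>E[C | G] = C_B\<close>.
  Hence \<open>E[D | G] = S_B - C_B\<close>, and the claim is the law of total variance
  \<open>E\<parallel>D\<parallel>\<^sup>2 = E\<parallel>E[D | G]\<parallel>\<^sup>2 + E[Var_h(D | G)]\<close> for the Brier entropy.\<close>

section \<open>Vectors in \<open>\<real>\<^sup>K\<close>\<close>

lemma vec_lambda_eq_sum_axis: "(\<chi> k. x k) = (\<Sum>k\<in>UNIV. x k *\<^sub>R axis k (1::real))"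
  by (simp add: vec_eq_iff axis_def if_distrib[of "\<lambda>c. _ * c"] cong: if_cong)

lemma borel_measurable_vec_lambda:
  "(\<And>k. (\<lambda>w. f k w) \<in> borel_measurable M) \<Longrightarrow>
    (\<lambda>w. (\<chi> k. f k w) :: real^'k::finite) \<in> borel_measurable M"
  unfolding vec_lambda_eq_sum_axis by (intro borel_measurable_sum borel_measurable_scaleR) auto

lemma integrable_vec_lambda:
  "(\<And>k. integrable M (\<lambda>w. f k w)) \<Longrightarrow> integrable M (\<lambda>w. (\<chi> k. f k w) :: real^'k::finite)"
  unfolding vec_lambda_eq_sum_axis
  by (intro Bochner_Integration.integrable_sum integrable_scaleR_left)

declare borel_measurable_nth [measurable]

lemma integrable_vec_nth: "integrable M U \<Longrightarrow> integrable M (\<lambda>w. U w $ k)"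
  using integrable_bounded_linear[OF bounded_linear_vec_nth] .

lemma set_integral_vec_nth:
  assumes "integrable M U" "A \<in> sets M"
  shows "(LINT w:A|M. U w $ k) = (LINT w:A|M. U w) $ k"
  using integral_bounded_linear[OF bounded_linear_vec_nth integrable_mult_indicator[OF assms(2,1)]]
  by (simp add: set_lebesgue_integral_def)

lemma norm_power2_vec: "(norm (x::real^'k::finite))\<^sup>2 = (\<Sum>i\<in>UNIV. (x$i)\<^sup>2)"
  by (simp add: norm_vec_def L2_set_def sum_nonneg)

lemma norm_le_1_prob_simplex:
  assumes "p \<in> prob_simplex"
  shows "norm p \<le> 1"
proof -
  have "norm p \<le> (\<Sum>i\<in>UNIV. \<bar>p $ i\<bar>)"
    by (rule norm_le_l1_cart)
  also have "\<dots> = 1"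
    using assms by (simp add: prob_simplex_def)
  finally show ?thesis .
qed

lemma AE_vec_eqI:
  fixes f g :: "'a \<Rightarrow> 'b^'k::finite"
  assumes "\<And>k. AE w in M. f w $ k = g w $ k"
  shows "AE w in M. f w = g w"
proof -
  have "AE w in M. \<forall>k\<in>UNIV. f w $ k = g w $ k"
    using assms by (intro AE_finite_allI) auto
  then show ?thesis
    by eventually_elim (simp add: vec_eq_iff)
qed

section \<open>Square-integrable random vectors\<close>

definition square_integrable ::
    "'a measure \<Rightarrow> ('a \<Rightarrow> 'b::{banach, second_countable_topology}) \<Rightarrow> bool" where
  "square_integrable M U \<longleftrightarrow> integrable M U \<and> integrable M (\<lambda>w. (norm (U w))\<^sup>2)"

lemma (in finite_measure) square_integrable_bounded:
  assumes "U \<in> borel_measurable M" "\<And>w. w \<in> space M \<Longrightarrow> norm (U w) \<le> c"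
  shows "square_integrable M U"
  unfolding square_integrable_def
proof
  show "integrable M U"
    using assms by (intro integrable_const_bound[where B=c]) auto
  have "norm (U w) ^ 2 \<le> c ^ 2" if "w \<in> space M" for w
    using assms(2)[OF that] by (intro power_mono) auto
  then show "integrable M (\<lambda>w. (norm (U w))\<^sup>2)"
    using assms by (intro integrable_const_bound[where B="c\<^sup>2"]) auto
qed

lemma (in finite_measure) square_integrable_indicator_vec:
  assumes "\<And>k. A k \<in> sets M"
  shows "square_integrable M (\<lambda>w. (\<chi> k. indicator (A k) w) :: real^'k::finite)"
proof (rule square_integrable_bounded)
  show "(\<lambda>w. (\<chi> k. indicator (A k) w) :: real^'k) \<in> borel_measurable M"
    using assms by (intro borel_measurable_vec_lambda) auto
  show "norm ((\<chi> k. indicator (A k) w) :: real^'k) \<le> CARD('k)" for w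
    using norm_le_l1_cart[of "(\<chi> k. indicator (A k) w) :: real^'k"]
      sum_bounded_above[of UNIV "\<lambda>k. \<bar>indicator (A k) w :: real\<bar>" 1]
    by (simp add: indicator_def)
qed

lemma square_integrable_diff:
  assumes "square_integrable M U" "square_integrable M V"
  shows "square_integrable M (\<lambda>w. U w - V w)"
  unfolding square_integrable_def
proof
  show "integrable M (\<lambda>w. U w - V w)"
    using assms by (auto simp: square_integrable_def)
  have bound: "(norm (u - v))\<^sup>2 \<le> 2 * (norm u)\<^sup>2 + 2 * (norm v)\<^sup>2" for u v :: 'b
  proof -
    have "(norm (u - v))\<^sup>2 \<le> (norm u + norm v)\<^sup>2"
      by (intro power_mono norm_triangle_ineq4) auto
    also have "\<dots> \<le> 2 * (norm u)\<^sup>2 + 2 * (norm v)\<^sup>2"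
      using zero_le_power2[of "norm u - norm v"] by (simp add: power2_eq_square algebra_simps)
    finally show ?thesis .
  qed
  have [measurable]: "U \<in> borel_measurable M" "V \<in> borel_measurable M"
    using assms by (auto simp: square_integrable_def)
  have "integrable M (\<lambda>w. 2 * (norm (U w))\<^sup>2 + 2 * (norm (V w))\<^sup>2)"
    using assms by (simp add: square_integrable_def)
  then show "integrable M (\<lambda>w. (norm (U w - V w))\<^sup>2)"
    by (rule Bochner_Integration.integrable_bound) (measurable, use bound in simp)
qed

lemma square_integrable_vec_nth:
  fixes U :: "'a \<Rightarrow> real^'k::finite"
  assumes "square_integrable M U"
  shows "integrable M (\<lambda>w. U w $ k)" "integrable M (\<lambda>w. (U w $ k)\<^sup>2)"
proof -
  have [measurable]: "U \<in> borel_measurable M"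
    and U: "integrable M U" "integrable M (\<lambda>w. (norm (U w))\<^sup>2)"
    using assms by (auto simp: square_integrable_def)
  show "integrable M (\<lambda>w. U w $ k)"
    using U(1) by (rule integrable_vec_nth)
  have bound: "(U w $ k)\<^sup>2 \<le> (norm (U w))\<^sup>2" for w
    using power_mono[OF component_le_norm_cart[of "U w" k] abs_ge_zero, of 2] by simp
  from U(2) show "integrable M (\<lambda>w. (U w $ k)\<^sup>2)"
    by (rule Bochner_Integration.integrable_bound) (measurable, use bound in simp)
qed

section \<open>Componentwise conditional expectation\<close>

lemma sigma_finite_subalgebra_gen_sigma:
  assumes "finite_measure M" "V \<in> measurable M N"
  shows "sigma_finite_subalgebra M (gen_sigma M V N)"
proof (rule finite_measure_subalgebra_is_sigma_finite)
  interpret finite_measure M by fact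
  show "finite_measure_subalgebra M (gen_sigma M V N)"
    by unfold_locales (simp add: subalgebra_def gen_sigma_def sets_image_in_sets[OF refl assms(2)])
qed

lemma subalgebra_gen_sigma:
  assumes "subalgebra M F" "V \<in> measurable F N"
  shows "subalgebra F (gen_sigma M V N)"
  using assms sets_image_in_sets[of F "space M" V N] by (auto simp: subalgebra_def gen_sigma_def)

lemma borel_measurable_vcond_exp [measurable]: "vcond_exp M F U \<in> borel_measurable M"
  unfolding vcond_exp_def by (rule borel_measurable_vec_lambda) simp

lemma (in sigma_finite_subalgebra) integrable_vcond_exp:
  fixes U :: "'a \<Rightarrow> real^'k::finite"
  assumes "integrable M U"
  shows "integrable M (vcond_exp M F U)"
  unfolding vcond_exp_def using assms
  by (intro integrable_vec_lambda real_cond_exp_int(1) integrable_vec_nth)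

lemma (in sigma_finite_subalgebra) square_integrable_vcond_exp:
  fixes U :: "'a \<Rightarrow> real^'k::finite"
  assumes "square_integrable M U"
  shows "square_integrable M (vcond_exp M F U)"
proof -
  have "integrable M (\<lambda>w. (real_cond_exp M F (\<lambda>w. U w $ k) w)\<^sup>2)" for k
    using square_integrable_vec_nth[OF assms, of k] convex_power2
    by (auto intro: integrable_convex_cond_exp[where I=UNIV and q="\<lambda>x. x\<^sup>2"])
  then have "integrable M (\<lambda>w. (norm (vcond_exp M F U w))\<^sup>2)"
    unfolding norm_power2_vec vcond_exp_def by simp
  with assms show ?thesis
    by (simp add: square_integrable_def integrable_vcond_exp)
qed

lemma (in sigma_finite_subalgebra) vcond_exp_charact:
  fixes U V :: "'a \<Rightarrow> real^'k::finite"
  assumes "\<And>A. A \<in> sets F \<Longrightarrow> (LINT w:A|M. U w) = (LINT w:A|M. V w)"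
    and "integrable M U" "integrable M V" and [measurable]: "V \<in> borel_measurable F"
  shows "AE w in M. vcond_exp M F U w = V w"
proof (rule AE_vec_eqI)
  fix k
  have "AE w in M. real_cond_exp M F (\<lambda>w. U w $ k) w = V w $ k"
  proof (rule real_cond_exp_charact)
    fix A assume "A \<in> sets F"
    moreover from this have "A \<in> sets M"
      using subalg by (auto simp: subalgebra_def)
    ultimately show "(LINT w:A|M. U w $ k) = (LINT w:A|M. V w $ k)"
      using assms by (simp add: set_integral_vec_nth)
  qed (use assms in \<open>auto intro: integrable_vec_nth\<close>)
  then show "AE w in M. vcond_exp M F U w $ k = V w $ k"
    by (simp add: vcond_exp_def)
qed

lemma (in sigma_finite_subalgebra) vcond_exp_diff:
  fixes U V :: "'a \<Rightarrow> real^'k::finite"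
  assumes "integrable M U" "integrable M V"
  shows "AE w in M. vcond_exp M F (\<lambda>w. U w - V w) w = vcond_exp M F U w - vcond_exp M F V w"
  by (intro AE_vec_eqI) (simp add: vcond_exp_def integrable_vec_nth assms)

lemma (in sigma_finite_subalgebra) vcond_exp_nested_subalg:
  fixes U :: "'a \<Rightarrow> real^'k::finite"
  assumes "subalgebra M G" "subalgebra G F" "integrable M U"
  shows "AE w in M. vcond_exp M F (vcond_exp M G U) w = vcond_exp M F U w"
  by (intro AE_vec_eqI) (simp add: vcond_exp_def integrable_vec_nth assms)

lemma (in sigma_finite_subalgebra) integral_var_h_brier:
  fixes U :: "'a \<Rightarrow> real^'k::finite"
  assumes "square_integrable M U"
  shows "(\<integral>w. var_h_brier M F U w \<partial>M)
       = (\<integral>w. (norm (U w))\<^sup>2 \<partial>M) - (\<integral>w. (norm (vcond_exp M F U w))\<^sup>2 \<partial>M)"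
proof -
  have "integrable M (\<lambda>w. (norm (U w))\<^sup>2)" "integrable M (\<lambda>w. (norm (vcond_exp M F U w))\<^sup>2)"
    using assms square_integrable_vcond_exp[OF assms] by (simp_all add: square_integrable_def)
  then show ?thesis
    by (simp add: var_h_brier_def real_cond_exp_int)
qed

section \<open>Conditional expectation given a partition\<close>

text \<open>On a null cell the average is \<open>0\<close> (division by zero); such cells carry no mass.\<close>

definition cell_average ::
    "'a measure \<Rightarrow> ('a \<Rightarrow> 'b::{banach, second_countable_topology}) \<Rightarrow> 'a set \<Rightarrow> 'b" where
  "cell_average M U A = (1 / measure M A) *\<^sub>R (LINT w:A|M. U w)"

lemma (in finite_measure) measure_scaleR_cell_average:
  assumes "A \<in> sets M" "integrable M U"
  shows "measure M A *\<^sub>R cell_average M U A = (LINT w:A|M. U w)"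
proof (cases "measure M A = 0")
  case True
  then have "A \<in> null_sets M"
    using assms by (simp add: emeasure_eq_measure null_sets_def)
  then have "(LINT w:A|M. U w) = (LINT w:{}|M. U w)"
    using assms by (intro set_integral_null_delta) auto
  with True show ?thesis
    by (simp add: set_lebesgue_integral_def)
qed (simp add: cell_average_def)

lemma sets_gen_sigma_cellwise_const:
  assumes cover: "space M = (\<Union>i\<in>I. E i)"
    and const: "\<And>i w. i \<in> I \<Longrightarrow> w \<in> E i \<Longrightarrow> V w = c i"
    and "V \<in> space M \<rightarrow> space N" "A \<in> sets (gen_sigma M V N)"
  obtains T where "T \<subseteq> I" "A = (\<Union>i\<in>T. E i)"
proof -
  from assms(3,4) obtain U where "A = V -` U \<inter> space M"
    by (auto simp: gen_sigma_def sets_vimage_algebra2)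
  then have "A = (\<Union>i\<in>{i\<in>I. c i \<in> U}. E i)"
    using cover const by auto
  then show ?thesis
    by (rule that[rotated]) auto
qed

lemma sum_indicator_scaleR_disjoint:
  fixes c :: "'i \<Rightarrow> 'b::real_vector"
  assumes "finite I" "i \<in> I" "w \<in> E i" "\<And>j. j \<in> I \<Longrightarrow> j \<noteq> i \<Longrightarrow> E i \<inter> E j = {}"
  shows "(\<Sum>j\<in>I. indicator (E j) w *\<^sub>R c j) = c i"
proof -
  have "(\<Sum>j\<in>I. indicator (E j) w *\<^sub>R c j) = (\<Sum>j\<in>I. if j = i then c i else 0)"
    using assms by (intro sum.cong) (auto simp: indicator_def)
  also have "\<dots> = c i"
    using assms by simp
  finally show ?thesis .
qed

lemma set_integral_disjoint_UN_eqI: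
  fixes U V :: "'a \<Rightarrow> 'b::{banach, second_countable_topology}"
  assumes "finite T" "\<And>i. i \<in> T \<Longrightarrow> E i \<in> sets M"
    and "\<And>i j. i \<in> T \<Longrightarrow> j \<in> T \<Longrightarrow> i \<noteq> j \<Longrightarrow> E i \<inter> E j = {}"
    and "integrable M U" "integrable M V"
    and "\<And>i. i \<in> T \<Longrightarrow> (LINT w:E i|M. U w) = (LINT w:E i|M. V w)"
  shows "(LINT w:(\<Union>i\<in>T. E i)|M. U w) = (LINT w:(\<Union>i\<in>T. E i)|M. V w)"
proof -
  have "AE w in M. w \<in> E i \<and> w \<in> E j \<longrightarrow> i = j" if "i \<in> T" "j \<in> T" for i j
    using assms(3) that by blast
  then have "(LINT w:(\<Union>i\<in>T. E i)|M. W w) = (\<Sum>i\<in>T. LINT w:E i|M. W w)"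
    if "integrable M W" for W :: "'a \<Rightarrow> 'b"
    using assms(1,2) that
    by (intro set_integral_finite_UN_AE)
       (auto simp: set_integrable_def intro!: integrable_mult_indicator)
  then show ?thesis
    using assms(4-6) by simp
qed

lemma (in finite_measure) vcond_exp_cell_average_step:
  fixes U :: "'a \<Rightarrow> real^'k::finite"
  assumes U: "integrable M U" and I: "finite I"
    and E: "\<And>i. i \<in> I \<Longrightarrow> E i \<in> sets M"
    and disj: "\<And>i j. i \<in> I \<Longrightarrow> j \<in> I \<Longrightarrow> i \<noteq> j \<Longrightarrow> E i \<inter> E j = {}"
    and cover: "space M = (\<Union>i\<in>I. E i)"
  defines "V \<equiv> \<lambda>w. \<Sum>i\<in>I. indicator (E i) w *\<^sub>R cell_average M U (E i)"
  shows "AE w in M. vcond_exp M (gen_sigma M V borel) U w = V w"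
proof -
  have V_cell: "V w = cell_average M U (E i)" if "i \<in> I" "w \<in> E i" for i w
    unfolding V_def using I that disj
    by (intro sum_indicator_scaleR_disjoint[where c="\<lambda>i. cell_average M U (E i)"]) auto
  have V_meas: "V \<in> borel_measurable M"
    unfolding V_def using E by (intro borel_measurable_sum borel_measurable_scaleR) auto
  have V_int: "integrable M V"
    unfolding V_def using E
    by (intro Bochner_Integration.integrable_sum integrable_scaleR_left integrable_real_indicator)
       (auto simp: less_top[symmetric])
  have cell: "(LINT w:E i|M. U w) = (LINT w:E i|M. V w)" if "i \<in> I" for i
  proof -
    have "(LINT w:E i|M. V w) = (LINT w:E i|M. cell_average M U (E i))"
      using E[OF that] V_cell[OF that] by (intro set_lebesgue_integral_cong) auto
    also have "\<dots> = measure M (E i) *\<^sub>R cell_average M U (E i)"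
      using E[OF that] by (simp add: set_integral_const)
    also have "\<dots> = (LINT w:E i|M. U w)"
      using E[OF that] U by (rule measure_scaleR_cell_average)
    finally show ?thesis ..
  qed
  have "(LINT w:A|M. U w) = (LINT w:A|M. V w)" if A: "A \<in> sets (gen_sigma M V borel)" for A
  proof -
    obtain T where T: "T \<subseteq> I" "A = (\<Union>i\<in>T. E i)"
      using sets_gen_sigma_cellwise_const
          [where c="\<lambda>i. cell_average M U (E i)", OF cover V_cell _ A]
      by auto
    from T(1) I have "finite T"
      by (rule finite_subset)
    then show ?thesis
      unfolding T(2) using T(1) E disj U V_int cell by (intro set_integral_disjoint_UN_eqI) blast+
  qed
  moreover have "sigma_finite_subalgebra M (gen_sigma M V borel)"
    using V_meas by (intro sigma_finite_subalgebra_gen_sigma) unfold_locales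
  moreover have "V \<in> borel_measurable (gen_sigma M V borel)"
    unfolding gen_sigma_def by (rule measurable_vimage_algebra1) simp
  ultimately show ?thesis
    using U V_int by (intro sigma_finite_subalgebra.vcond_exp_charact)
qed

lemma (in finite_measure) vcond_exp_binned:
  fixes S :: "'a \<Rightarrow> real^'k::finite"
  assumes S: "integrable M S"
    and B: "\<And>j. j < J \<Longrightarrow> B j \<in> sets borel"
    and disj: "\<And>i j. i < J \<Longrightarrow> j < J \<Longrightarrow> i \<noteq> j \<Longrightarrow> B i \<inter> B j = {}"
    and cover: "\<And>w. w \<in> space M \<Longrightarrow> S w \<in> (\<Union>j<J. B j)"
  shows "AE w in M. vcond_exp M (gen_sigma M (binned M S J B) borel) S w = binned M S J B w"
proof -
  have "binned M S J B
      = (\<lambda>w. \<Sum>j<J. indicator (S -` B j \<inter> space M) w *\<^sub>R cell_average M S (S -` B j \<inter> space M))"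
    by (simp add: binned_def cell_average_def set_lebesgue_integral_def)
  moreover have "S -` B j \<inter> space M \<in> sets M" if "j < J" for j
    using measurable_sets[OF borel_measurable_integrable[OF S] B[OF that]] .
  moreover have "space M = (\<Union>j<J. S -` B j \<inter> space M)"
    using cover by auto
  ultimately show ?thesis
    using S disj by (simp only:) (rule vcond_exp_cell_average_step; blast)
qed

lemma binned_measurable_gen_sigma:
  assumes "\<And>j. j < J \<Longrightarrow> B j \<in> sets borel"
  shows "binned M S J B \<in> borel_measurable (gen_sigma M S borel)"
  unfolding binned_def gen_sigma_def using assms
  by (intro borel_measurable_sum borel_measurable_scaleR borel_measurable_const
      borel_measurable_indicator in_vimage_algebra) auto

lemma borel_measurable_binned:
  assumes "S \<in> borel_measurable M" "\<And>j. j < J \<Longrightarrow> B j \<in> sets borel"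
  shows "binned M S J B \<in> borel_measurable M"
proof (rule measurable_from_subalg)
  show "subalgebra M (gen_sigma M S borel)"
    using sets_image_in_sets[OF refl assms(1)] by (simp add: subalgebra_def gen_sigma_def)
qed (rule binned_measurable_gen_sigma[OF assms(2)])

lemma (in finite_measure) vcond_exp_binned_calibration_gap:
  fixes S Q :: "'a \<Rightarrow> real^'k::finite"
  assumes S: "integrable M S" and Q: "integrable M Q"
    and B: "\<And>j. j < J \<Longrightarrow> B j \<in> sets borel"
    and disj: "\<And>i j. i < J \<Longrightarrow> j < J \<Longrightarrow> i \<noteq> j \<Longrightarrow> B i \<inter> B j = {}"
    and cover: "\<And>w. w \<in> space M \<Longrightarrow> S w \<in> (\<Union>j<J. B j)"
  defines "F \<equiv> gen_sigma M S borel" and "G \<equiv> gen_sigma M (binned M S J B) borel"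
  shows "AE w in M. vcond_exp M G (\<lambda>w. S w - vcond_exp M F Q w) w
                   = binned M S J B w - vcond_exp M G Q w"
proof -
  have S_meas: "S \<in> borel_measurable M"
    using S by (rule borel_measurable_integrable)
  have F: "sigma_finite_subalgebra M F"
    unfolding F_def using S_meas by (intro sigma_finite_subalgebra_gen_sigma) unfold_locales
  have G: "sigma_finite_subalgebra M G"
    unfolding G_def using S_meas B
    by (intro sigma_finite_subalgebra_gen_sigma borel_measurable_binned) unfold_locales
  have GF: "subalgebra F G"
    unfolding F_def G_def using sigma_finite_subalgebra.subalg[OF F[unfolded F_def]]
    by (rule subalgebra_gen_sigma) (rule binned_measurable_gen_sigma[OF B])
  have "AE w in M. vcond_exp M G S w = binned M S J B w"
    unfolding G_def using S B disj cover by (rule vcond_exp_binned)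
  moreover have "AE w in M. vcond_exp M G (vcond_exp M F Q) w = vcond_exp M G Q w"
    using sigma_finite_subalgebra.subalg[OF F] GF Q
    by (rule sigma_finite_subalgebra.vcond_exp_nested_subalg[OF G])
  moreover have "AE w in M. vcond_exp M G (\<lambda>w. S w - vcond_exp M F Q w) w
                 = vcond_exp M G S w - vcond_exp M G (vcond_exp M F Q) w"
    using S sigma_finite_subalgebra.integrable_vcond_exp[OF F Q]
    by (rule sigma_finite_subalgebra.vcond_exp_diff[OF G])
  ultimately show ?thesis
    by eventually_elim simp
qed

theorem proposition5:
  fixes M :: "'a measure" and MX :: "'x measure"
    and X :: "'a \<Rightarrow> 'x" and Y :: "'a \<Rightarrow> real ^ 'k::finite"
    and f :: "'x \<Rightarrow> real ^ 'k"
    and J :: nat and B :: "nat \<Rightarrow> (real ^ 'k) set"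
    and Q S C S_B C_B :: "'a \<Rightarrow> real ^ 'k"
  assumes prob: "prob_space M"
    and X_meas: "X \<in> measurable M MX"
    and Y_meas: "Y \<in> borel_measurable M"
    and Y_onehot: "\<And>w. w \<in> space M \<Longrightarrow> \<exists>k. Y w = axis k 1"
    and Q_def: "Q = (\<lambda>w. \<chi> k. real_cond_exp M (gen_sigma M X MX)
                        (indicator {w'\<in>space M. Y w' = axis k 1}) w)"
    and f_meas: "f \<in> borel_measurable MX"
    and f_simplex: "\<And>x. f x \<in> prob_simplex"
    and S_def: "S = f \<circ> X"
    and C_def: "C = vcond_exp M (gen_sigma M S borel) Q"
    and J_pos: "J \<ge> 1"
    and B_borel: "\<And>j. j < J \<Longrightarrow> B j \<in> sets borel"
    and B_nonempty: "\<And>j. j < J \<Longrightarrow> B j \<noteq> {}"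
    and B_disj: "\<And>i j. i < J \<Longrightarrow> j < J \<Longrightarrow> i \<noteq> j \<Longrightarrow> B i \<inter> B j = {}"
    and B_cover: "(\<Union>j<J. B j) = prob_simplex"
    and S_B_def: "S_B = binned M S J B"
    and C_B_def: "C_B = vcond_exp M (gen_sigma M S_B borel) Q"
  shows "(\<integral>w. (norm (S_B w - C_B w))\<^sup>2 \<partial>M)
       = (\<integral>w. (norm (S w - C w))\<^sup>2 \<partial>M)
         - (\<integral>w. var_h_brier M (gen_sigma M S_B borel) (\<lambda>w'. S w' - C w') w \<partial>M)"
proof -
  interpret prob_space M by (rule prob)
  have S_meas: "S \<in> borel_measurable M"
    unfolding S_def using X_meas f_meas by (rule measurable_comp)
  have S_sq: "square_integrable M S"
    using S_meas f_simplex norm_le_1_prob_simplex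
    by (intro square_integrable_bounded) (auto simp: S_def)
  have "square_integrable M (\<lambda>w. (\<chi> k. indicator {w'\<in>space M. Y w' = axis k 1} w) :: real^'k)"
    using Y_meas by (intro square_integrable_indicator_vec) measurable
  then have Q_sq: "square_integrable M Q"
    using sigma_finite_subalgebra.square_integrable_vcond_exp
      [OF sigma_finite_subalgebra_gen_sigma[OF finite_measure_axioms X_meas]]
    by (fastforce simp: Q_def vcond_exp_def)
  have C_sq: "square_integrable M C"
    unfolding C_def using Q_sq S_meas
    by (intro sigma_finite_subalgebra.square_integrable_vcond_exp sigma_finite_subalgebra_gen_sigma
        finite_measure_axioms)
  have G: "sigma_finite_subalgebra M (gen_sigma M S_B borel)"
    unfolding S_B_def using S_meas B_borel
    by (intro sigma_finite_subalgebra_gen_sigma finite_measure_axioms borel_measurable_binned)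
  have [measurable]: "S_B \<in> borel_measurable M" "C_B \<in> borel_measurable M"
    unfolding S_B_def C_B_def using S_meas B_borel by (auto intro: borel_measurable_binned)
  have "AE w in M. vcond_exp M (gen_sigma M S_B borel) (\<lambda>w. S w - C w) w = S_B w - C_B w"
    unfolding S_B_def C_def C_B_def using S_sq Q_sq B_borel B_disj B_cover f_simplex
    by (intro vcond_exp_binned_calibration_gap) (auto simp: square_integrable_def S_def)
  then have "AE w in M. (norm (S_B w - C_B w))\<^sup>2
      = (norm (vcond_exp M (gen_sigma M S_B borel) (\<lambda>w. S w - C w) w))\<^sup>2"
    by eventually_elim simp
  then have "(\<integral>w. (norm (S_B w - C_B w))\<^sup>2 \<partial>M)
      = (\<integral>w. (norm (vcond_exp M (gen_sigma M S_B borel) (\<lambda>w. S w - C w) w))\<^sup>2 \<partial>M)"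
    by (rule integral_cong_AE[rotated 2]; measurable)
  also have "\<dots> = (\<integral>w. (norm (S w - C w))\<^sup>2 \<partial>M)
      - (\<integral>w. var_h_brier M (gen_sigma M S_B borel) (\<lambda>w'. S w' - C w') w \<partial>M)"
    using sigma_finite_subalgebra.integral_var_h_brier[OF G square_integrable_diff[OF S_sq C_sq]]
    by simp
  finally show ?thesis .
qed
end
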